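(* Let $n\ge2$. For any set $X\subset\mathbb{S}$ there exist $c\in\mathbb{R}^n$ and $k\in\mathbb{R}$ such that the spherical cap $\mathcal{C}_{c,k}=\{x\in\mathbb{S}:c^Tx>k\}$ satisfies $\mathcal{C}_{c,k}\subset X$ and $\Delta(\mathcal{C}_{c,k})=\Delta(X)$.
   Context: $\mathbb{S}$ and $\mathbb{B}$ are the Euclidean unit sphere and closed unit ball of $\mathbb{R}^n$. For $X\subset\mathbb{S}$, $\Delta(X)=\sup\{r\in[0,1]: r\mathbb{B}\subset\mathrm{conv}(\mathbb{S}\setminus X)\}$, with the supremum of the empty set taken as $0$. *)

theory Defs
  imports "HOL-Analysis.Analysis"
begin

definition Delta :: "(real^'n) set \<Rightarrow> real" where
  "Delta X = (let R = {r \<in> {0..1}. (\<lambda>x. r *\<^sub>R x) ` cball 0 1 \<subseteq> convex hull (sphere 0 1 - X)}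
              in if R = {} then 0 else Sup R)"

definition cap :: "real^'n \<Rightarrow> real \<Rightarrow> (real^'n) set" where
  "cap c k = {x \<in> sphere 0 1. c \<bullet> x > k}"

end

theory Submission
  imports Defs
begin

text \<open>Let \<open>r = \<Delta>(X)\<close> and \<open>A = S - X\<close>. For every \<open>r' > r\<close> some point of \<open>r'B\<close> lies outside
  \<open>conv A\<close>, and separating it from \<open>conv A\<close> gives a unit vector \<open>c\<close> with \<open>c\<^sup>Tx \<le> r'\<close> on \<open>A\<close>.
  By compactness of the sphere we may take \<open>r' = r\<close>, so the cap \<open>C(c,r)\<close> avoids \<open>A\<close>,
  i.e. lies in \<open>X\<close>. Its complement in \<open>S\<close> lies in the halfspace \<open>c\<^sup>Tx \<le> r\<close>, which does not
  contain \<open>r'c\<close> for \<open>r' > r\<close>; hence \<open>\<Delta>(C(c,r)) \<le> r\<close>, and the reverse inequality is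
  antitonicity of \<open>\<Delta>\<close>.\<close>

lemma bdd_above_unit_interval_subset: "bdd_above {r \<in> {0..1::real}. P r}"
  by (rule bdd_aboveI[of _ 1]) auto

lemma Delta_nonneg: "0 \<le> Delta (X::(real^'n) set)"
  unfolding Delta_def Let_def
  using bdd_above_unit_interval_subset by (auto intro: order.trans[OF _ cSup_upper])

lemma Delta_le_one: "Delta (X::(real^'n) set) \<le> 1"
  unfolding Delta_def Let_def by (auto intro!: cSup_least)

lemma Delta_antimono:
  fixes A B :: "(real^'n) set"
  assumes "A \<subseteq> B"
  shows "Delta B \<le> Delta A"
proof -
  define R where "R Y = {r \<in> {0..1::real}.
    (\<lambda>x. r *\<^sub>R x) ` cball (0::real^'n) 1 \<subseteq> convex hull (sphere 0 1 - Y)}" for Y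
  have "R B \<subseteq> R A"
    unfolding R_def using assms by (auto intro: subsetD[OF hull_mono, rotated])
  moreover have "bdd_above (R A)"
    unfolding R_def by (rule bdd_above_unit_interval_subset)
  ultimately have "(if R B = {} then 0 else Sup (R B)) \<le> (if R A = {} then 0 else Sup (R A))"
    by (auto simp: R_def intro: order.trans[OF _ cSup_upper] cSup_subset_mono)
  then show ?thesis unfolding Delta_def Let_def R_def .
qed

lemma Delta_less_imp_not_subset:
  fixes X :: "(real^'n) set"
  assumes "Delta X < r" "r \<le> 1"
  obtains x where "x \<in> cball 0 1" "r *\<^sub>R x \<notin> convex hull (sphere 0 1 - X)"
proof -
  define R where "R = {r \<in> {0..1::real}.
    (\<lambda>x. r *\<^sub>R x) ` cball (0::real^'n) 1 \<subseteq> convex hull (sphere 0 1 - X)}"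
  have "bdd_above R" unfolding R_def by (rule bdd_above_unit_interval_subset)
  then have "r \<notin> R"
    using assms(1) cSup_upper[of r R]
    unfolding Delta_def Let_def R_def[symmetric] by (auto split: if_splits)
  moreover have "0 \<le> r" using assms Delta_nonneg[of X] by linarith
  ultimately show ?thesis using assms(2) that unfolding R_def image_subset_iff by auto
qed

lemma unit_normal_separating_point:
  fixes A :: "'a::euclidean_space set"
  assumes "A \<noteq> {}" "p \<notin> convex hull A"
  obtains c where "norm c = 1" "\<And>y. y \<in> A \<Longrightarrow> c \<bullet> y \<le> norm p"
proof -
  obtain a b where ab: "a \<noteq> 0" "\<forall>y\<in>convex hull A. a \<bullet> y \<le> b" "b \<le> a \<bullet> p"
    using separating_hyperplane_sets[of "convex hull A" "{p}"] assms
    by (auto simp: convex_convex_hull)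
  define c where "c = a /\<^sub>R norm a"
  have "c \<bullet> y \<le> norm p" if "y \<in> A" for y
  proof -
    have "a \<bullet> y \<le> a \<bullet> p" using ab that hull_subset[of A convex] by fastforce
    then have "c \<bullet> y \<le> c \<bullet> p" unfolding c_def using ab(1) by (auto simp: divide_right_mono)
    also have "\<dots> \<le> norm c * norm p" by (rule order.trans[OF abs_ge_self Cauchy_Schwarz_ineq2])
    finally show ?thesis using ab(1) by (simp add: c_def)
  qed
  moreover have "norm c = 1" using ab(1) by (simp add: c_def)
  ultimately show ?thesis using that by blast
qed

lemma Delta_approx_supporting_unit_normal:
  fixes X :: "(real^'n) set"
  assumes "sphere 0 1 - X \<noteq> {}" "e > 0"
  obtains c where "norm c = 1" "\<And>y. y \<in> sphere 0 1 - X \<Longrightarrow> c \<bullet> y \<le> Delta X + e"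
proof (cases "Delta X < 1")
  case True
  define r where "r = min 1 (Delta X + e)"
  have "Delta X < r" "r \<le> 1" using True assms(2) by (auto simp: r_def)
  then obtain x where x: "x \<in> cball 0 1" "r *\<^sub>R x \<notin> convex hull (sphere 0 1 - X)"
    by (rule Delta_less_imp_not_subset)
  then obtain c where "norm c = 1" "\<And>y. y \<in> sphere 0 1 - X \<Longrightarrow> c \<bullet> y \<le> norm (r *\<^sub>R x)"
    using unit_normal_separating_point[OF assms(1) x(2)] by blast
  moreover have "norm (r *\<^sub>R x) \<le> Delta X + e"
    using x(1) \<open>Delta X < r\<close> Delta_nonneg[of X] mult_left_le[of "norm x" r]
    by (auto simp: r_def)
  ultimately show ?thesis using that by force
next
  case False
  then have "c \<bullet> y \<le> Delta X + e" if "norm c = 1" "y \<in> sphere 0 1 - X" for c y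
    using that Delta_le_one[of X] assms(2) norm_cauchy_schwarz[of c y] by auto
  moreover obtain b :: "real^'n" where "b \<in> Basis" using nonempty_Basis by blast
  ultimately show ?thesis using that norm_Basis by metis
qed

lemma Delta_supporting_unit_normal:
  fixes X :: "(real^'n) set"
  assumes "sphere 0 1 - X \<noteq> {}"
  obtains c where "norm c = 1" "\<And>y. y \<in> sphere 0 1 - X \<Longrightarrow> c \<bullet> y \<le> Delta X"
proof -
  define S where "S m = {c \<in> sphere (0::real^'n) 1.
    \<forall>y\<in>sphere 0 1 - X. c \<bullet> y \<le> Delta X + 1 / real (Suc m)}" for m
  have "S m = sphere 0 1 \<inter> (\<Inter>y\<in>sphere 0 1 - X. {c. y \<bullet> c \<le> Delta X + 1 / real (Suc m)})" for m
    unfolding S_def by (auto simp: inner_commute)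
  then have "closed (S m)" for m by (auto intro!: closed_INT closed_halfspace_le)
  moreover have "S m \<noteq> {}" for m
  proof -
    obtain c where "norm c = 1" "\<And>y. y \<in> sphere 0 1 - X \<Longrightarrow> c \<bullet> y \<le> Delta X + 1 / real (Suc m)"
      using Delta_approx_supporting_unit_normal[OF assms, of "1 / real (Suc m)"] by auto
    then have "c \<in> S m" unfolding S_def by auto
    then show ?thesis by blast
  qed
  moreover have "S n \<subseteq> S m" if "m \<le> n" for m n
  proof -
    have "1 / real (Suc n) \<le> 1 / real (Suc m)" using that by (simp add: frac_le)
    then show ?thesis unfolding S_def by force
  qed
  moreover have "bounded (S 0)" unfolding S_def by (rule bounded_subset[OF bounded_sphere[of 0 1]]) auto
  ultimately obtain c where c: "\<And>m. c \<in> S m" using bounded_closed_nest[of S] by blast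
  have "c \<bullet> y \<le> Delta X" if "y \<in> sphere 0 1 - X" for y
  proof (rule field_le_epsilon)
    fix e :: real assume "e > 0"
    then obtain m where "1 / real (Suc m) < e" by (metis nat_approx_posE)
    moreover have "c \<bullet> y \<le> Delta X + 1 / real (Suc m)" using c[of m] that unfolding S_def by auto
    ultimately show "c \<bullet> y \<le> Delta X + e" by linarith
  qed
  moreover have "norm c = 1" using c[of 0] unfolding S_def by auto
  ultimately show ?thesis using that by blast
qed

lemma Delta_cap_le:
  fixes c :: "real^'n"
  assumes "norm c = 1" "0 \<le> k"
  shows "Delta (cap c k) \<le> k"
proof -
  define Q where "Q = {s \<in> {0..1::real}.
    (\<lambda>x. s *\<^sub>R x) ` cball (0::real^'n) 1 \<subseteq> convex hull (sphere 0 1 - cap c k)}"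
  have halfspace: "convex hull (sphere 0 1 - cap c k) \<subseteq> {y. c \<bullet> y \<le> k}"
    by (rule hull_minimal) (auto simp: cap_def convex_halfspace_le)
  have "q \<le> k" if "q \<in> Q" for q
  proof -
    have "q *\<^sub>R c \<in> convex hull (sphere 0 1 - cap c k)"
      using that assms(1) unfolding Q_def by (auto simp: image_subset_iff)
    then have "q * (c \<bullet> c) \<le> k" using halfspace by auto
    then show ?thesis using assms(1) by (simp add: inner_commute dot_square_norm)
  qed
  then have "(if Q = {} then 0 else Sup Q) \<le> k" using assms(2) by (auto intro!: cSup_least)
  then show ?thesis unfolding Delta_def Let_def Q_def .
qed

theorem lemma2:
  fixes X :: "(real^'n) set"
  assumes "CARD('n) \<ge> 2"
    and "X \<subseteq> sphere 0 1"
  shows "\<exists>c k. cap c k \<subseteq> X \<and> Delta (cap c k) = Delta X"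
proof (cases "sphere 0 1 - X = {}")
  \<comment> \<open>The argument works in every dimension.\<close>
  case True
  then have "cap 0 (-1) = X" using assms(2) by (auto simp: cap_def)
  then show ?thesis by blast
next
  case False
  then obtain c where c: "norm c = 1" "\<And>y. y \<in> sphere 0 1 - X \<Longrightarrow> c \<bullet> y \<le> Delta X"
    by (rule Delta_supporting_unit_normal) blast
  then have "cap c (Delta X) \<subseteq> X" by (force simp: cap_def)
  moreover have "Delta (cap c (Delta X)) \<le> Delta X"
    using c(1) Delta_nonneg by (rule Delta_cap_le)
  moreover have "Delta X \<le> Delta (cap c (Delta X))"
    using \<open>cap c (Delta X) \<subseteq> X\<close> by (rule Delta_antimono)
  ultimately show ?thesis by (intro exI[of _ c] exI[of _ "Delta X"]) simp
qed

end
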